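(* For every term $t\in T^{*,\circ}$, one has $t =_{ALD} I(t)[J(t)]$.
   Context: For $n\ge1$, $T_n^*$ (resp. $T_n^\circ$, $T_n^{*,\circ}$) is the set of terms built from variables $x_1,\dots,x_n$ using the binary operator $*$ (resp. $\circ$, resp. both); $T^*=\bigcup_nT_n^*$, $T^{*,\circ}=\bigcup_nT_n^{*,\circ}$, $x$ denotes $x_1$, and $T_1^\circ$ is the set of $\circ$-terms in $x$. The size of a term is its number of occurrences of variables. $=_{ALD}$ is the congruence on $T^{*,\circ}$ generated by all instances of $x*(y*z)=(x*y)*(x*z)$, $x*(y*z)=(x\circ y)*z$ and $x*(y\circ z)=(x*y)\circ(x*z)$. For a set $S$ with binary operation $*$, $\widehat S$ denotes the finite nonempty sequences over $S$, $\frown$ concatenation, and $\vec s\mathbin{\vec{*}}\vec t=(s_1*\cdots*s_p*t_1,\dots,s_1*\cdots*s_p*t_q)$ ($p,q$ the lengths; parentheses added on the right). For $t\in T^{*,\circ}$, $I(t)\in T_1^\circ$ and $J(t)\in\widehat{T^*}$ are defined inductively: if $t$ is a variable, $(I(t),J(t))=(x,(t))$; if $t=t_1*t_2$, $(I(t),J(t))=(I(t_2),J(t_1)\mathbin{\vec{*}}J(t_2))$; if $t=t_1\circ t_2$, $(I(t),J(t))=(I(t_1)\circ I(t_2),J(t_1)\frown J(t_2))$ (the size of $I(t)$ equals the length of $J(t)$). For $v\in T_1^\circ$ of size $p$ and a length-$p$ sequence $\vec t=(t_1,\dots,t_p)$ of terms of $T^*$, $v[\vec t]$ denotes the term obtained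 from $v$ by substituting $t_1,\dots,t_p$ for the occurrences of the variable in $v$, enumerated from left to right. *)

theory Defs
  imports Main
begin

text \<open>Terms built from variables x_1, x_2, ... with two binary operators * and o.
  Convention: V i denotes the variable x_(i+1); so V 0 is x = x_1.\<close>

datatype trm = V nat | Star trm trm | Circ trm trm

definition xvar :: trm where "xvar = V 0"

fun tsize :: "trm \<Rightarrow> nat" where
  "tsize (V i) = 1"
| "tsize (Star a b) = tsize a + tsize b"
| "tsize (Circ a b) = tsize a + tsize b"

fun is_star_term :: "trm \<Rightarrow> bool" where
  "is_star_term (V i) = True"
| "is_star_term (Star a b) = (is_star_term a \<and> is_star_term b)"
| "is_star_term (Circ a b) = False"

fun is_circ1_term :: "trm \<Rightarrow> bool" where
  "is_circ1_term (V i) = (i = 0)"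
| "is_circ1_term (Star a b) = False"
| "is_circ1_term (Circ a b) = (is_circ1_term a \<and> is_circ1_term b)"

inductive ald :: "trm \<Rightarrow> trm \<Rightarrow> bool" where
  ax1: "ald (Star x (Star y z)) (Star (Star x y) (Star x z))"
| ax2: "ald (Star x (Star y z)) (Star (Circ x y) z)"
| ax3: "ald (Star x (Circ y z)) (Circ (Star x y) (Star x z))"
| refl: "ald t t"
| sym: "ald s t \<Longrightarrow> ald t s"
| trans: "ald s t \<Longrightarrow> ald t u \<Longrightarrow> ald s u"
| cong_star: "ald s s' \<Longrightarrow> ald t t' \<Longrightarrow> ald (Star s t) (Star s' t')"
| cong_circ: "ald s s' \<Longrightarrow> ald t t' \<Longrightarrow> ald (Circ s t) (Circ s' t')"

definition star_prefix :: "trm list \<Rightarrow> trm \<Rightarrow> trm" where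
  "star_prefix ss t = foldr Star ss t"

definition vstar :: "trm list \<Rightarrow> trm list \<Rightarrow> trm list" where
  "vstar ss ts = map (star_prefix ss) ts"

fun I :: "trm \<Rightarrow> trm" where
  "I (V i) = xvar"
| "I (Star a b) = I b"
| "I (Circ a b) = Circ (I a) (I b)"

fun J :: "trm \<Rightarrow> trm list" where
  "J (V i) = [V i]"
| "J (Star a b) = vstar (J a) (J b)"
| "J (Circ a b) = J a @ J b"

text \<open>v[t_1,...,t_p]: substitute the list entries for the variable occurrences
  of v from left to right (intended for v in T_1^o with length ts = tsize v).\<close>
fun subst :: "trm \<Rightarrow> trm list \<Rightarrow> trm" where
  "subst (V i) ts = hd ts"
| "subst (Star a b) ts = Star (subst a (take (tsize a) ts)) (subst b (drop (tsize a) ts))"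
| "subst (Circ a b) ts = Circ (subst a (take (tsize a) ts)) (subst b (drop (tsize a) ts))"

end

theory Submission
  imports Defs
begin

text \<open>A \<open>\<circ>\<close>-node is immediate, because substitution splits \<open>J a @ J b\<close>
  exactly at \<open>tsize (I a) = length (J a)\<close>. For \<open>a * b\<close> two distributivity laws for a
  \<open>\<circ>\<close>-term \<open>v\<close> in the single variable \<open>x\<close> do the work: \<open>s * v[t\<^sub>1,\<dots>,t\<^sub>p] = v[s*t\<^sub>1,\<dots>,s*t\<^sub>p]\<close>
  (from \<open>x*(y\<circ>z) = (x*y)\<circ>(x*z)\<close>) and \<open>v[t\<^sub>1,\<dots>,t\<^sub>p] * u = t\<^sub>1*\<dots>*t\<^sub>p*u\<close> (from
  \<open>x*(y*z) = (x\<circ>y)*z\<close>). Hence \<open>a*b = a*I(b)[J(b)] = I(b)[a*J(b)]\<close>, and each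
  \<open>a*t\<^sub>j = I(a)[J(a)]*t\<^sub>j\<close> is the \<open>j\<close>-th entry of \<open>J(a) \<^bold>* J(b)\<close>.\<close>

declare ald.trans [trans]

lemma is_circ1_term_I: "is_circ1_term (I t)"
  by (induction t) (auto simp: xvar_def)

lemma tsize_I_eq_length_J: "tsize (I t) = length (J t)"
  by (induction t) (auto simp: xvar_def vstar_def)

lemma ald_subst_cong:
  "list_all2 ald ts ts' \<Longrightarrow> ald (subst v ts) (subst v ts')"
proof (induction v arbitrary: ts ts')
  case (V i)
  then show ?case
    by (cases ts; cases ts') (auto intro: ald.refl)
next
  case (Star a b)
  then have "length ts = length ts'" by (blast dest: list_all2_lengthD)
  with Star show ?case
    by (auto intro!: ald.cong_star list_all2_takeI list_all2_dropI)
next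
  case (Circ a b)
  then have "length ts = length ts'" by (blast dest: list_all2_lengthD)
  with Circ show ?case
    by (auto intro!: ald.cong_circ list_all2_takeI list_all2_dropI)
qed

lemma ald_Star_subst_left:
  assumes "is_circ1_term v" and "length ts = tsize v"
  shows "ald (Star s (subst v ts)) (subst v (map (Star s) ts))"
  using assms
proof (induction v arbitrary: ts)
  case (V i)
  then obtain t where "ts = [t]" by (cases ts) auto
  then show ?case by (auto intro: ald.refl)
next
  case (Star a b)
  then show ?case by simp
next
  case (Circ a b)
  have "ald (Star s (subst (Circ a b) ts))
      (Circ (Star s (subst a (take (tsize a) ts))) (Star s (subst b (drop (tsize a) ts))))"
    by (simp add: ald.ax3)
  also have "ald \<dots> (subst (Circ a b) (map (Star s) ts))"
    using Circ by (simp add: take_map drop_map ald.cong_circ)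
  finally show ?case .
qed

lemma ald_Star_subst_right:
  assumes "is_circ1_term v" and "length ts = tsize v"
  shows "ald (Star (subst v ts) u) (star_prefix ts u)"
  using assms
proof (induction v arbitrary: ts u)
  case (V i)
  then obtain t where "ts = [t]" by (cases ts) auto
  then show ?case by (auto intro: ald.refl simp: star_prefix_def)
next
  case (Star a b)
  then show ?case by simp
next
  case (Circ a b)
  define ts\<^sub>1 where "ts\<^sub>1 = take (tsize a) ts"
  define ts\<^sub>2 where "ts\<^sub>2 = drop (tsize a) ts"
  have "ald (Star (subst (Circ a b) ts) u) (Star (subst a ts\<^sub>1) (Star (subst b ts\<^sub>2) u))"
    by (simp add: ts\<^sub>1_def ts\<^sub>2_def ald.ax2 ald.sym)
  also have "ald \<dots> (Star (subst a ts\<^sub>1) (star_prefix ts\<^sub>2 u))"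
    using Circ by (simp add: ts\<^sub>2_def ald.cong_star ald.refl)
  also have "ald \<dots> (star_prefix ts\<^sub>1 (star_prefix ts\<^sub>2 u))"
    using Circ by (simp add: ts\<^sub>1_def)
  also have "star_prefix ts\<^sub>1 (star_prefix ts\<^sub>2 u) = star_prefix ts u"
    by (simp add: ts\<^sub>1_def ts\<^sub>2_def star_prefix_def flip: foldr_append)
  finally show ?case .
qed

lemma ald_Star_star_prefix_J:
  assumes "ald s (subst (I s) (J s))"
  shows "ald (Star s w) (star_prefix (J s) w)"
proof -
  have "ald (Star s w) (Star (subst (I s) (J s)) w)"
    using assms by (simp add: ald.cong_star ald.refl)
  also have "ald \<dots> (star_prefix (J s) w)"
    by (simp add: ald_Star_subst_right is_circ1_term_I tsize_I_eq_length_J)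
  finally show ?thesis .
qed

theorem lemma1p12:
  fixes t :: trm
  shows "ald t (subst (I t) (J t))"
proof (induction t)
  case (V i)
  then show ?case by (simp add: xvar_def ald.refl)
next
  case (Star a b)
  have Star_a: "ald (Star a w) (star_prefix (J a) w)" for w
    using Star.IH(1) by (rule ald_Star_star_prefix_J)
  have "ald (Star a b) (Star a (subst (I b) (J b)))"
    using Star.IH(2) by (simp add: ald.cong_star ald.refl)
  also have "ald \<dots> (subst (I b) (map (Star a) (J b)))"
    by (simp add: ald_Star_subst_left is_circ1_term_I tsize_I_eq_length_J)
  also have "ald \<dots> (subst (I b) (vstar (J a) (J b)))"
    by (rule ald_subst_cong) (simp add: vstar_def list_all2_conv_all_nth Star_a)
  finally show ?case by simp
next
  case (Circ a b)
  then show ?case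
    by (simp add: tsize_I_eq_length_J ald.cong_circ)
qed

end
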